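(* ($I\Sigma_1$) Let $n,k\in\mathbb{N}$. If a finite set $X\subseteq\mathbb{N}$ is $\omega^{n+6k}$-large and $\omega^3$-sparse, then $X$ admits an $(\omega^n,\omega^k)$-grouping for $\min X$ colors.
   Context: $\alpha$-largeness for $\alpha<\omega^\omega$: writing ordinals in Cantor normal form, $0[m]=0$, $(\beta+1)[m]=\beta$, $(\beta+\omega^n)[m]=\beta+\omega^{n-1}\cdot m$ for $n\ge1$; a finite $\{x_0<\dots<x_{\ell-1}\}$ is $\alpha$-large if $\alpha[x_0]\cdots[x_{\ell-1}]=0$. $X$ is \emph{$\alpha$-sparse} if $\min X>3$ and for all $x<y$ in $X$ the interval $[x,y)$ is $\alpha$-large. For $P:[X]^2\to\{0,\dots,\min X-1\}$, a finite sequence $\langle F_i\subseteq X: i<l\rangle$ of finite sets is an \emph{$(\alpha,\beta)$-grouping for $P$} if: $\max F_i<\min F_j$ for $i<j<l$; each $F_i$ is $\alpha$-large; $\{\max F_i: i<l\}$ is $\beta$-large; and for all $i<j<l$, $x,x'\in F_i$, $y,y'\in F_j$, $P(x,y)=P(x',y')$. $X$ \emph{admits an $(\alpha,\beta)$-grouping for $k$ colors} if every $P:[X]^2\to\{0,\dots,k-1\}$ has an $(\alpha,\beta)$-grouping. *)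

theory Defs
  imports Main
begin

text \<open>Ordinals below omega^omega in Cantor normal form, represented as the
non-increasing list of exponents [e1, ..., er] standing for
omega^e1 + ... + omega^er (e1 >= ... >= er).  The empty list is 0.\<close>

type_synonym ord_cnf = "nat list"

definition omega_pow :: "nat \<Rightarrow> ord_cnf" where
  "omega_pow n = [n]"

text \<open>Fundamental sequence: 0[m] = 0, (beta+1)[m] = beta,
(beta + omega^e)[m] = beta + omega^(e-1) * m for e >= 1.\<close>
definition fund :: "ord_cnf \<Rightarrow> nat \<Rightarrow> ord_cnf" where
  "fund a m = (if a = [] then []
               else if last a = 0 then butlast a
               else butlast a @ replicate m (last a - 1))"

fun fund_iter :: "ord_cnf \<Rightarrow> nat list \<Rightarrow> ord_cnf" where
  "fund_iter a [] = a"
| "fund_iter a (x # xs) = fund_iter (fund a x) xs"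

definition large :: "ord_cnf \<Rightarrow> nat set \<Rightarrow> bool" where
  "large a X \<longleftrightarrow> finite X \<and> fund_iter a (sorted_list_of_set X) = []"

definition sparse :: "ord_cnf \<Rightarrow> nat set \<Rightarrow> bool" where
  "sparse a X \<longleftrightarrow> X \<noteq> {} \<and> Min X > 3 \<and>
     (\<forall>x\<in>X. \<forall>y\<in>X. x < y \<longrightarrow> large a {x..<y})"

text \<open>A colouring P of pairs [X]^2 is given as P x y for x < y.\<close>
definition is_grouping :: "ord_cnf \<Rightarrow> ord_cnf \<Rightarrow> nat set \<Rightarrow> (nat \<Rightarrow> nat \<Rightarrow> nat)
     \<Rightarrow> nat set list \<Rightarrow> bool" where
  "is_grouping a b X P Fs \<longleftrightarrow>
     (\<forall>i<length Fs. Fs ! i \<subseteq> X \<and> finite (Fs ! i) \<and> Fs ! i \<noteq> {}) \<and>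
     (\<forall>i j. i < j \<and> j < length Fs \<longrightarrow> Max (Fs ! i) < Min (Fs ! j)) \<and>
     (\<forall>i<length Fs. large a (Fs ! i)) \<and>
     large b {Max (Fs ! i) | i. i < length Fs} \<and>
     (\<forall>i j. i < j \<and> j < length Fs \<longrightarrow>
        (\<forall>x\<in>Fs ! i. \<forall>x'\<in>Fs ! i. \<forall>y\<in>Fs ! j. \<forall>y'\<in>Fs ! j. P x y = P x' y'))"

definition admits_grouping :: "ord_cnf \<Rightarrow> ord_cnf \<Rightarrow> nat \<Rightarrow> nat set \<Rightarrow> bool" where
  "admits_grouping a b k X \<longleftrightarrow>
     (\<forall>P. (\<forall>x\<in>X. \<forall>y\<in>X. x < y \<longrightarrow> P x y < k) \<longrightarrow> (\<exists>Fs. is_grouping a b X P Fs))"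

end

theory Submission
  imports Defs "HOL-Library.Multiset" "HOL-Library.FuncSet"
begin

text \<open>On lists that at least double from one element to the next, largeness is monotone in the
  ordinal and in the list, and it obeys a pigeonhole principle for the natural sum: if a list is
  (\<alpha> \<oplus> \<beta>)-large and split into two parts, one part is \<alpha>-large or the other \<beta>-large.
  Hence an \<omega>^n\<cdot>m-large list coloured with at most m colours has an \<omega>^n-large colour class.

  \<omega>^3-sparseness makes X grow like a tower, y \<ge> 2^2^x for x < y in X, so for x \<in> X the at most
  x^(2x) colour profiles of a point against 2x other points are fewer than the next element of X.
  An \<omega>^(n+6)-large list then contains an \<omega>^n-large first group f0 and an \<omega>^(n+4)-large Y
  above it with f0 \<times> Y monochromatic.  Y splits into last f0 blocks, each \<omega>^(n+1)-large, and
  choosing profile-homogeneous \<omega>^n-large sublists block by block from the last one backwards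
  yields last f0 further groups: an (\<omega>^n, \<omega>)-grouping.  Refining every group of an
  (\<omega>^(n+6), \<omega>^k)-grouping in this way gives an (\<omega>^n, \<omega>^(k+1))-grouping, which is the
  induction step on k.\<close>

abbreviation large_list :: "ord_cnf \<Rightarrow> nat list \<Rightarrow> bool" where
  "large_list a xs \<equiv> fund_iter a xs = []"

lemma fund_Nil[simp]: "fund [] m = []"
  by (simp add: fund_def)

lemma fund_iter_Nil[simp]: "large_list [] xs"
  by (induction xs) auto

lemma fund_iter_append: "fund_iter a (xs @ ys) = fund_iter (fund_iter a xs) ys"
  by (induction xs arbitrary: a) auto

lemma fund_snoc: "fund (p @ [e]) m = p @ (if e = 0 then [] else replicate m (e - 1))"
  by (simp add: fund_def)

lemma fund_append: "q \<noteq> [] \<Longrightarrow> fund (p @ q) m = p @ fund q m"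
  unfolding fund_def by (auto simp: butlast_append)

lemma fund_omega_pow_Suc: "fund [Suc e] m = replicate m e"
  using fund_snoc[of "[]" "Suc e" m] by simp

lemma large_append_split: "q \<noteq> [] \<Longrightarrow> large_list (p @ q) xs \<Longrightarrow>
  \<exists>i \<le> length xs. large_list q (take i xs) \<and> large_list p (drop i xs)"
proof (induction xs arbitrary: q)
  case Nil then show ?case by simp
next
  case (Cons x xs)
  show ?case
  proof (cases "fund q x = []")
    case True
    then have "large_list p xs" using Cons.prems by (simp add: fund_append)
    then show ?thesis using True by (intro exI[of _ 1]) auto
  next
    case False
    have "large_list (p @ fund q x) xs" using Cons.prems by (simp add: fund_append)
    from Cons.IH[OF False this] obtain i where "i \<le> length xs" "large_list (fund q x) (take i xs)"
       "large_list p (drop i xs)" by blast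
    then show ?thesis by (intro exI[of _ "Suc i"]) auto
  qed
qed

lemma fund_iter_replicate_0: "length xs \<le> j \<Longrightarrow> fund_iter (p @ replicate j 0) xs = p @ replicate (j - length xs) 0"
proof (induction xs arbitrary: j)
  case Nil then show ?case by simp
next
  case (Cons x xs)
  then obtain j' where j: "j = Suc j'" by (cases j) auto
  have "fund (p @ replicate j 0) x = p @ replicate j' 0"
    using fund_snoc[of "p @ replicate j' 0" 0 x] by (simp add: j replicate_append_same[symmetric])
  then show ?case using Cons by (simp add: j)
qed

lemma large_replicate_0_length: "large_list (replicate j 0) xs \<Longrightarrow> j \<le> length xs"
proof (rule ccontr)
  assume a: "large_list (replicate j 0) xs" "\<not> j \<le> length xs"
  then show False using fund_iter_replicate_0[of xs j "[]"] by simp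
qed

text \<open>On exponent lists in Cantor normal form, the lexicographic order is the ordinal order.\<close>

fun lexle :: "nat list \<Rightarrow> nat list \<Rightarrow> bool" where
  "lexle [] b = True"
| "lexle (x # a) [] = False"
| "lexle (x # a) (y # b) = (x < y \<or> (x = y \<and> lexle a b))"

lemma lexle_refl[simp]: "lexle a a"
  by (induction a) auto

lemma lexle_trans: "lexle a b \<Longrightarrow> lexle b c \<Longrightarrow> lexle a c"
proof (induction a b arbitrary: c rule: lexle.induct)
  case (3 x a y b)
  then show ?case by (cases c) auto
qed auto

lemma lexle_append: "lexle a (a @ b)"
  by (induction a) auto

lemma lexle_same_prefix[simp]: "lexle (p @ a) (p @ b) = lexle a b"
  by (induction p) auto

lemma lexle_Nil2: "lexle a [] \<Longrightarrow> a = []"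
  by (cases a) auto

abbreviation cnf :: "nat list \<Rightarrow> bool" where "cnf a \<equiv> sorted_wrt (\<ge>) a"

lemma lexle_replicate: "cnf a \<Longrightarrow> (\<forall>x\<in>set a. x \<le> d) \<Longrightarrow> length a < m \<Longrightarrow> lexle a (replicate m d)"
proof (induction a arbitrary: m)
  case Nil then show ?case by simp
next
  case (Cons x a)
  then obtain m' where m: "m = Suc m'" by (cases m) auto
  show ?case
  proof (cases "x < d")
    case True then show ?thesis by (simp add: m)
  next
    case False
    then have "x = d" using Cons by auto
    moreover have "lexle a (replicate m' d)" using Cons by (intro Cons.IH) (auto simp: m)
    ultimately show ?thesis by (simp add: m)
  qed
qed

lemma lexle_snoc_cases: "lexle a (b @ [e]) \<Longrightarrow> lexle a b \<or> (\<exists>a'. a = b @ a' \<and> lexle a' [e])"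
proof (induction b arbitrary: a)
  case Nil then show ?case by auto
next
  case (Cons y b)
  show ?case
  proof (cases a)
    case Nil then show ?thesis by simp
  next
    case (Cons x a'')
    with Cons.prems have "x < y \<or> (x = y \<and> lexle a'' (b @ [e]))" by simp
    then show ?thesis
    proof
      assume "x < y" then show ?thesis using Cons by simp
    next
      assume h: "x = y \<and> lexle a'' (b @ [e])"
      from Cons.IH h consider "lexle a'' b" | "\<exists>a'. a'' = b @ a' \<and> lexle a' [e]" by blast
      then show ?thesis using h Cons by cases auto
    qed
  qed
qed

lemma lexle_fund:
  assumes "cnf a" "lexle a b" "a \<noteq> b" "b \<noteq> []" "length a < m"
  shows "lexle a (fund b m)"
proof -
  obtain bb e where b: "b = bb @ [e]" using assms(4) by (metis append_butlast_last_id)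
  define r where "r = (if e = 0 then [] else replicate m (e - 1))"
  have fb: "fund b m = bb @ r" by (simp add: b fund_snoc r_def)
  have "lexle a (bb @ [e])" using assms(2) b by simp
  from lexle_snoc_cases[OF this]
  consider "lexle a bb" | a' where "a = bb @ a'" "lexle a' [e]" by blast
  then show ?thesis
  proof cases
    case 1
    have "lexle bb (bb @ r)" by (rule lexle_append)
    with 1 show ?thesis unfolding fb by (rule lexle_trans)
  next
    case 2
    show ?thesis
    proof (cases a')
      case Nil then show ?thesis using 2 fb by (simp add: lexle_append)
    next
      case (Cons x a'')
      have "lexle (x # a'') [e]" using 2 Cons by simp
      then have "x < e \<or> (x = e \<and> a'' = [])" by (cases a'') auto
      moreover have "a' \<noteq> [e]" using assms(3) b 2 by auto
      ultimately have xe: "x < e" using Cons by auto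
      have cnfa': "cnf a'" using assms(1) 2 by (simp add: sorted_wrt_append)
      then have "\<forall>z\<in>set a'. z \<le> e - 1" using Cons xe by auto
      moreover have "length a' < m" using assms(5) 2 by simp
      ultimately have "lexle a' (replicate m (e - 1))" using cnfa' by (intro lexle_replicate) auto
      moreover have "r = replicate m (e - 1)" using xe by (simp add: r_def)
      ultimately show ?thesis using fb 2 by simp
    qed
  qed
qed

lemma lexle_fund_self: "lexle (fund a m) a"
proof (cases "a = []")
  case False
  then obtain aa e where a: "a = aa @ [e]" by (metis append_butlast_last_id)
  show ?thesis by (cases m) (auto simp: a fund_snoc)
qed simp

lemma lexle_fund_mono: "m \<le> m' \<Longrightarrow> lexle (fund b m) (fund b m')"
proof (cases "b = []")
  case False
  assume "m \<le> m'"
  then have r: "replicate m' d = replicate m d @ replicate (m' - m) d" for d :: nat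
    by (metis le_add_diff_inverse replicate_add)
  obtain bb e where b: "b = bb @ [e]" using False by (metis append_butlast_last_id)
  show ?thesis by (auto simp: b fund_snoc r lexle_append)
qed simp

lemma cnf_replicate[simp]: "cnf (replicate m d)"
  by (induction m) auto

lemma lexle_replicate_mono: "k \<le> m \<Longrightarrow> lexle (replicate k x) (replicate m x)"
  by (metis le_add_diff_inverse lexle_append replicate_add)

lemma cnf_fund: "cnf a \<Longrightarrow> cnf (fund a m)"
proof (cases "a = []")
  case False
  assume c: "cnf a"
  obtain aa e where a: "a = aa @ [e]" using False by (metis append_butlast_last_id)
  from c show ?thesis by (auto simp: a fund_snoc sorted_wrt_append)
qed simp

lemma length_fund: "length (fund a m) \<le> length a + m - 1"
proof (cases "a = []")
  case False
  obtain aa e where a: "a = aa @ [e]" using False by (metis append_butlast_last_id)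
  show ?thesis by (auto simp: a fund_snoc)
qed simp

abbreviation doubling :: "nat list \<Rightarrow> bool" where "doubling xs \<equiv> sorted_wrt (\<lambda>u v. 2 * u \<le> v) xs"

text \<open>Step x adds fewer than x terms to the normal form, so on a doubling list the normal form
  always has fewer terms than the next element; this is what lemma lexle_fund needs.\<close>

lemma large_mono:
  "list_all2 (\<le>) xs ys \<Longrightarrow> doubling xs \<Longrightarrow> cnf a \<Longrightarrow> lexle a b \<Longrightarrow> (xs \<noteq> [] \<longrightarrow> length a < hd xs)
   \<Longrightarrow> large_list b ys \<Longrightarrow> large_list a xs"
proof (induction xs arbitrary: ys a b)
  case Nil then show ?case by (simp add: lexle_Nil2)
next
  case (Cons x xs)
  from Cons.prems(1) obtain y ys' where ys: "ys = y # ys'" "x \<le> y" "list_all2 (\<le>) xs ys'"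
    by (cases ys) auto
  show ?case
  proof (cases "a = []")
    case True then show ?thesis by simp
  next
    case anz: False
    have bnz: "b \<noteq> []" using anz Cons.prems(4) lexle_Nil2 by blast
    have lx: "length a < x" using Cons.prems(5) by simp
    have l1: "lexle (fund a x) (fund b y)"
    proof (cases "a = b")
      case True then show ?thesis using lexle_fund_mono ys(2) by simp
    next
      case False
      have "lexle a (fund b x)" using lexle_fund[OF Cons.prems(3,4) False bnz lx] .
      then show ?thesis using lexle_fund_self lexle_fund_mono[OF ys(2)] lexle_trans by metis
    qed
    have "large_list (fund a x) xs"
    proof (rule Cons.IH[OF ys(3) _ cnf_fund[OF Cons.prems(3)] l1])
      show "doubling xs" using Cons.prems(2) by simp
      show "xs \<noteq> [] \<longrightarrow> length (fund a x) < hd xs"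
      proof
        assume "xs \<noteq> []"
        then have "2 * x \<le> hd xs" using Cons.prems(2) by (cases xs) auto
        moreover have "length (fund a x) \<le> length a + x - 1" by (rule length_fund)
        ultimately show "length (fund a x) < hd xs" using lx by linarith
      qed
      show "large_list (fund b y) ys'" using Cons.prems(6) ys by simp
    qed
    then show ?thesis by simp
  qed
qed

lemma doubling_nth_mono: "doubling xs \<Longrightarrow> i < j \<Longrightarrow> j < length xs \<Longrightarrow> xs ! i \<le> xs ! j"
  using sorted_wrt_nth_less[of "\<lambda>u v. 2 * u \<le> v" xs i j] by simp

lemma doubling_hd_le: "doubling xs \<Longrightarrow> y \<in> set xs \<Longrightarrow> hd xs \<le> y"
  by (cases xs) auto

lemma large_prepend:
  assumes "doubling (zs @ ys)" "cnf a" "zs @ ys \<noteq> [] \<longrightarrow> length a < hd (zs @ ys)" "large_list a ys"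
  shows "large_list a (zs @ ys)"
proof -
  define xs where "xs = take (length ys) (zs @ ys)"
  have len: "length xs = length ys" by (simp add: xs_def)
  have "list_all2 (\<le>) xs ys"
  proof (rule list_all2_all_nthI)
    show "length xs = length ys" by (rule len)
    fix i assume i: "i < length xs"
    have "xs ! i = (zs @ ys) ! i" unfolding xs_def by (rule nth_take) (use i len in simp)
    also have "\<dots> \<le> (zs @ ys) ! (i + length zs)"
    proof (cases "length zs = 0")
      case False
      then show ?thesis using assms(1) i len by (intro doubling_nth_mono) auto
    qed simp
    also have "\<dots> = ys ! i" by (simp add: nth_append)
    finally show "xs ! i \<le> ys ! i" .
  qed
  moreover have "doubling xs" unfolding xs_def by (rule sorted_wrt_take[OF assms(1)])
  moreover have "xs \<noteq> [] \<longrightarrow> length a < hd xs"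
  proof
    assume "xs \<noteq> []"
    then have "length ys > 0" using len by auto
    then have "hd xs = hd (zs @ ys)" unfolding xs_def by (rule hd_take)
    then show "length a < hd xs" using assms(3) \<open>xs \<noteq> []\<close> by (auto simp: xs_def)
  qed
  ultimately have "large_list a xs" using large_mono[of xs ys a a] assms(2,4) by simp
  moreover have "zs @ ys = xs @ drop (length ys) (zs @ ys)" unfolding xs_def by (rule append_take_drop_id[symmetric])
  ultimately show ?thesis by (metis fund_iter_append fund_iter_Nil)
qed

lemma large_mono_ordinal:
  "doubling xs \<Longrightarrow> cnf a \<Longrightarrow> lexle a b \<Longrightarrow> (xs \<noteq> [] \<longrightarrow> length a < hd xs) \<Longrightarrow>
   large_list b xs \<Longrightarrow> large_list a xs"
  using large_mono[of xs xs a b] by (simp add: list_all2_refl)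

definition natural_sum :: "nat list \<Rightarrow> nat list \<Rightarrow> nat list" where
  "natural_sum a b = rev (sort (a @ b))"

lemma rev_sort_eq: "cnf r \<Longrightarrow> mset r = mset l \<Longrightarrow> rev (sort l) = r"
proof -
  assume c: "cnf r" and m: "mset r = mset l"
  have "sort l = rev r"
    by (rule properties_for_sort) (use c m in \<open>auto simp: sorted_wrt_rev\<close>)
  then show ?thesis by simp
qed

lemma cnf_rev_sort: "cnf (rev (sort l))"
  by (simp add: sorted_wrt_rev)

lemma cnf_natural_sum: "cnf (natural_sum a b)"
  by (simp add: natural_sum_def cnf_rev_sort)

lemma length_natural_sum: "length (natural_sum a b) = length a + length b"
  by (simp add: natural_sum_def)

lemma natural_sum_commute: "natural_sum a b = natural_sum b a"
  unfolding natural_sum_def by (rule rev_sort_eq[OF cnf_rev_sort]) (simp add: ac_simps)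

lemma cnf_last_le: "cnf b \<Longrightarrow> x \<in> set b \<Longrightarrow> last b \<le> x"
proof (induction b)
  case (Cons y b) then show ?case by (cases b) auto
qed simp

lemma cnf_append: "cnf l1 \<Longrightarrow> cnf l2 \<Longrightarrow> (\<forall>x\<in>set l1. \<forall>y\<in>set l2. y \<le> x) \<Longrightarrow> cnf (l1 @ l2)"
  by (simp add: sorted_wrt_append)

lemma fund_natural_sum_left:
  assumes "cnf al" "cnf be" "al \<noteq> []" "be \<noteq> []" "last al \<le> last be"
  shows "fund (natural_sum al be) w = natural_sum (fund al w) be"
proof -
  obtain al' a where al: "al = al' @ [a]" using assms(3) by (metis append_butlast_last_id)
  define R where "R = (if a = 0 then [] else replicate w (a - 1))"
  have geb: "\<forall>x\<in>set be. a \<le> x" using assms(2,5) cnf_last_le al by fastforce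
  have gea: "\<forall>x\<in>set al'. a \<le> x" using assms(1) al by (auto simp: sorted_wrt_append)
  have e1: "natural_sum al be = rev (sort (al' @ be)) @ [a]"
    unfolding natural_sum_def
  proof (rule rev_sort_eq)
    show "cnf (rev (sort (al' @ be)) @ [a])"
      by (rule cnf_append) (use geb gea in \<open>auto simp: cnf_rev_sort\<close>)
    show "mset (rev (sort (al' @ be)) @ [a]) = mset (al @ be)" by (simp add: al)
  qed
  have fa: "fund al w = al' @ R" by (simp add: al fund_snoc R_def)
  have rR: "\<forall>x\<in>set R. x < a" by (auto simp: R_def)
  have e2: "natural_sum (fund al w) be = rev (sort (al' @ be)) @ R"
    unfolding natural_sum_def fa
  proof (rule rev_sort_eq)
    have "\<forall>x\<in>set (rev (sort (al' @ be))). \<forall>y\<in>set R. y \<le> x" using geb gea rR by fastforce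
    then show "cnf (rev (sort (al' @ be)) @ R)"
      by (intro cnf_append) (auto simp: cnf_rev_sort R_def)
    show "mset (rev (sort (al' @ be)) @ R) = mset ((al' @ R) @ be)" by simp
  qed
  show ?thesis by (simp add: e1 e2 fund_snoc R_def)
qed

lemma fund_natural_sum_right:
  assumes "cnf al" "cnf be" "al \<noteq> []" "be \<noteq> []" "last be \<le> last al"
  shows "fund (natural_sum al be) w = natural_sum al (fund be w)"
  using fund_natural_sum_left[OF assms(2,1,4,3,5)] by (simp add: natural_sum_commute)

lemma lexle_lt_head: "(\<forall>x\<in>set t. x < a) \<Longrightarrow> lexle t (a # t2)"
  by (cases t) auto

lemma lexle_natural_sum_fund:
  assumes "cnf al" "cnf be" "al \<noteq> []" "be \<noteq> []" "last be < last al"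
  shows "lexle (natural_sum (fund al w) be) (natural_sum al (fund be w))"
proof -
  obtain al' a where al: "al = al' @ [a]" using assms(3) by (metis append_butlast_last_id)
  obtain be' g where be: "be = be' @ [g]" using assms(4) by (metis append_butlast_last_id)
  have ga: "g < a" using assms(5) al be by simp
  define C where "C = al' @ be'"
  define H where "H = rev (sort (filter (\<lambda>x. a \<le> x) C))"
  define Lo where "Lo = filter (\<lambda>x. \<not> a \<le> x) C"
  define Ra where "Ra = replicate w (a - 1)"
  define Rg where "Rg = (if g = 0 then [] else replicate w (g - 1))"
  have fal: "fund al w = al' @ Ra" using ga by (simp add: al fund_snoc Ra_def)
  have fbe: "fund be w = be' @ Rg" by (simp add: be fund_snoc Rg_def)
  have mC: "mset C = mset (filter (\<lambda>x. a \<le> x) C) + mset Lo"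
    unfolding Lo_def by (simp add: multiset_partition[symmetric])
  have Hge: "\<forall>x\<in>set H. a \<le> x" by (auto simp: H_def)
  have Lolt: "\<forall>x\<in>set Lo. x < a" by (auto simp: Lo_def)
  have e1: "natural_sum (fund al w) be = H @ rev (sort (Lo @ Ra @ [g]))"
    unfolding natural_sum_def
  proof (rule rev_sort_eq)
    have lt: "\<forall>x\<in>set (Lo @ Ra @ [g]). x < a" using Lolt ga by (auto simp: Ra_def)
    have "\<forall>x\<in>set H. \<forall>y\<in>set (rev (sort (Lo @ Ra @ [g]))). y \<le> x"
    proof (intro ballI)
      fix x y assume "x \<in> set H" "y \<in> set (rev (sort (Lo @ Ra @ [g])))"
      then have "a \<le> x" "y < a" using Hge lt by auto
      then show "y \<le> x" by simp
    qed
    then show "cnf (H @ rev (sort (Lo @ Ra @ [g])))"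
      by (intro cnf_append) (auto simp: cnf_rev_sort H_def)
    show "mset (H @ rev (sort (Lo @ Ra @ [g]))) = mset (fund al w @ be)"
      using mC by (simp add: H_def fal be C_def ac_simps)
  qed
  have e2: "natural_sum al (fund be w) = H @ a # rev (sort (Lo @ Rg))"
    unfolding natural_sum_def
  proof (rule rev_sort_eq)
    have lt: "\<forall>x\<in>set (Lo @ Rg). x < a" using Lolt ga by (auto simp: Rg_def)
    then have "\<forall>x\<in>set H. \<forall>y\<in>set (a # rev (sort (Lo @ Rg))). y \<le> x" using Hge by fastforce
    moreover have "cnf (a # rev (sort (Lo @ Rg)))"
    proof -
      have "\<forall>y\<in>set (Lo @ Rg). y \<le> a" using lt less_imp_le by blast
      then show ?thesis by (simp add: cnf_rev_sort)
    qed
    ultimately show "cnf (H @ a # rev (sort (Lo @ Rg)))"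
      by (intro cnf_append) (auto simp: cnf_rev_sort H_def)
    show "mset (H @ a # rev (sort (Lo @ Rg))) = mset (al @ fund be w)"
      using mC by (simp add: H_def fbe al C_def ac_simps)
  qed
  have "\<forall>x\<in>set (rev (sort (Lo @ Ra @ [g]))). x < a" using Lolt ga by (auto simp: Ra_def)
  then show ?thesis unfolding e1 e2 by (simp add: lexle_lt_head)
qed

lemma doubling_Cons_hd: "doubling (w # ws) \<Longrightarrow> ws \<noteq> [] \<Longrightarrow> 2 * w \<le> hd ws"
  by (cases ws) auto

lemma large_natural_sum_fund_left:
  assumes "doubling ws" "cnf al" "cnf be" "al \<noteq> []" "be \<noteq> []"
    and "ws \<noteq> [] \<longrightarrow> length (fund al w) + length be < hd ws"
    and "large_list (fund (natural_sum al be) w) ws"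
  shows "large_list (natural_sum (fund al w) be) ws"
proof (cases "last al \<le> last be")
  case True
  then show ?thesis using assms(7) fund_natural_sum_left[OF assms(2-5)] by simp
next
  case False
  then have "last be < last al" by simp
  have "large_list (natural_sum al (fund be w)) ws"
    using assms(7) fund_natural_sum_right[OF assms(2-5)] \<open>last be < last al\<close> by simp
  from large_mono_ordinal[OF assms(1) cnf_natural_sum
      lexle_natural_sum_fund[OF assms(2-5) \<open>last be < last al\<close>] _ this]
  show ?thesis using assms(6) by (simp add: length_natural_sum)
qed

lemma large_natural_sum_fund_right:
  assumes "doubling ws" "cnf al" "cnf be" "al \<noteq> []" "be \<noteq> []"
    and "ws \<noteq> [] \<longrightarrow> length al + length (fund be w) < hd ws"
    and "large_list (fund (natural_sum al be) w) ws"
  shows "large_list (natural_sum al (fund be w)) ws"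
  using large_natural_sum_fund_left[OF assms(1,3,2,5,4)] assms(6,7) by (simp add: natural_sum_commute add.commute)

text \<open>Pigeonhole for the natural sum: each element w of ws is charged to the summand whose part
  contains it, and the fundamental sequence of that summand alone is applied.\<close>

lemma large_natural_sum_split:
  "doubling ws \<Longrightarrow> set ws \<subseteq> A \<union> B \<Longrightarrow> A \<inter> B = {} \<Longrightarrow> cnf al \<Longrightarrow> cnf be \<Longrightarrow>
   (ws \<noteq> [] \<longrightarrow> length al + length be < hd ws) \<Longrightarrow> large_list (natural_sum al be) ws \<Longrightarrow>
   large_list al (filter (\<lambda>x. x \<in> A) ws) \<or> large_list be (filter (\<lambda>x. x \<in> B) ws)"
proof (induction ws arbitrary: al be)
  case Nil
  then have "length (natural_sum al be) = 0" by simp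
  then show ?case by (simp add: length_natural_sum)
next
  case (Cons w ws)
  show ?case
  proof (cases "al = [] \<or> be = []")
    case True then show ?thesis by auto
  next
    case False
    then have an: "al \<noteq> []" and bn: "be \<noteq> []" by auto
    have dws: "doubling ws" using Cons.prems(1) by simp
    have hw: "ws \<noteq> [] \<Longrightarrow> 2 * w \<le> hd ws" using Cons.prems(1) by (rule doubling_Cons_hd)
    have rest: "large_list (fund (natural_sum al be) w) ws" using Cons.prems(7) by simp
    have IH': "large_list al' (filter (\<lambda>x. x \<in> A) ws) \<or> large_list be' (filter (\<lambda>x. x \<in> B) ws)"
      if "cnf al'" "cnf be'" "length al' + length be' < 2 * w" "large_list (natural_sum al' be') ws" for al' be'
    proof (rule Cons.IH[OF dws _ Cons.prems(3) that(1,2) _ that(4)])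
      show "set ws \<subseteq> A \<union> B" using Cons.prems(2) by simp
      show "ws \<noteq> [] \<longrightarrow> length al' + length be' < hd ws" using hw that(3) by auto
    qed
    have "length al + length be < w" using Cons.prems(6) by simp
    then have lA: "length (fund al w) + length be < 2 * w" and lB: "length al + length (fund be w) < 2 * w"
      using length_fund[of al w] length_fund[of be w] by linarith+
    show ?thesis
    proof (cases "w \<in> A")
      case True
      then have "w \<notin> B" using Cons.prems(3) by auto
      have "ws \<noteq> [] \<longrightarrow> length (fund al w) + length be < hd ws" using hw lA by auto
      from large_natural_sum_fund_left[OF dws Cons.prems(4,5) an bn this rest]
      have "large_list (fund al w) (filter (\<lambda>x. x \<in> A) ws) \<or> large_list be (filter (\<lambda>x. x \<in> B) ws)"
        by (rule IH'[OF cnf_fund[OF Cons.prems(4)] Cons.prems(5) lA])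
      then show ?thesis using True \<open>w \<notin> B\<close> by auto
    next
      case False
      then have "w \<in> B" using Cons.prems(2) by auto
      have "ws \<noteq> [] \<longrightarrow> length al + length (fund be w) < hd ws" using hw lB by auto
      from large_natural_sum_fund_right[OF dws Cons.prems(4,5) an bn this rest]
      have "large_list al (filter (\<lambda>x. x \<in> A) ws) \<or> large_list (fund be w) (filter (\<lambda>x. x \<in> B) ws)"
        by (rule IH'[OF Cons.prems(4) cnf_fund[OF Cons.prems(5)] lB])
      then show ?thesis using False \<open>w \<in> B\<close> by auto
    qed
  qed
qed

lemma natural_sum_replicate: "natural_sum [n] (replicate k n) = replicate (Suc k) n"
  unfolding natural_sum_def by (rule rev_sort_eq) auto

lemma large_pigeonhole_card:
  assumes "finite V" "V \<noteq> {}"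
  shows "doubling ws \<Longrightarrow> (\<forall>y\<in>set ws. chi y \<in> V) \<Longrightarrow> (ws \<noteq> [] \<longrightarrow> card V < hd ws) \<Longrightarrow>
    large_list (replicate (card V) n) ws \<Longrightarrow> \<exists>v\<in>V. large_list [n] (filter (\<lambda>y. chi y = v) ws)"
  using assms
proof (induction V arbitrary: ws rule: finite_ne_induct)
  case (singleton x)
  then have "filter (\<lambda>y. chi y = x) ws = ws" by (intro filter_True) auto
  then show ?case using singleton by simp
next
  case (insert x F)
  have cd: "card (insert x F) = Suc (card F)" using insert by simp
  have "large_list (natural_sum [n] (replicate (card F) n)) ws" using insert.prems(4) cd by (simp add: natural_sum_replicate)
  from large_natural_sum_split[OF insert.prems(1) _ _ _ _ _ this, of "{y. chi y = x}" "{y. chi y \<in> F}"] insert.prems(2,3) insert.hyps cd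
  consider "large_list [n] (filter (\<lambda>y. chi y = x) ws)"
    | "large_list (replicate (card F) n) (filter (\<lambda>y. chi y \<in> F) ws)"
    by auto
  then show ?case
  proof cases
    case 1 then show ?thesis by auto
  next
    case 2
    define ws' where "ws' = filter (\<lambda>y. chi y \<in> F) ws"
    have "\<exists>v\<in>F. large_list [n] (filter (\<lambda>y. chi y = v) ws')"
    proof (rule insert.IH)
      show "doubling ws'" using insert.prems(1) by (simp add: ws'_def sorted_wrt_filter)
      show "\<forall>y\<in>set ws'. chi y \<in> F" by (simp add: ws'_def)
      show "ws' \<noteq> [] \<longrightarrow> card F < hd ws'"
      proof
        assume ne: "ws' \<noteq> []"
        then have "hd ws' \<in> set ws" by (metis ws'_def filter_is_subset hd_in_set subsetD)
        then have "hd ws \<le> hd ws'" by (rule doubling_hd_le[OF insert.prems(1)])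
        moreover have "ws \<noteq> []" using ne by (auto simp: ws'_def)
        ultimately show "card F < hd ws'" using insert.prems(3) cd by auto
      qed
      show "large_list (replicate (card F) n) ws'" using 2 by (simp add: ws'_def)
    qed
    then obtain v where v: "v \<in> F" "large_list [n] (filter (\<lambda>y. chi y = v) ws')" by blast
    have "filter (\<lambda>y. chi y = v) ws' = filter (\<lambda>y. chi y = v) ws"
      unfolding ws'_def filter_filter using v(1) by (metis (mono_tags))
    then show ?thesis using v by auto
  qed
qed

lemma large_pigeonhole:
  assumes "finite V" "V \<noteq> {}" "card V \<le> m" "doubling ws" "ws \<noteq> [] \<longrightarrow> m < hd ws"
    and "\<forall>y\<in>set ws. chi y \<in> V" "large_list (replicate m e) ws"
  shows "\<exists>v\<in>V. large_list [e] (filter (\<lambda>y. chi y = v) ws)"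
proof (rule large_pigeonhole_card[OF assms(1,2,4,6)])
  show "ws \<noteq> [] \<longrightarrow> card V < hd ws" using assms(3,5) by auto
  show "large_list (replicate (card V) e) ws"
    using large_mono_ordinal[OF assms(4) cnf_replicate lexle_replicate_mono[OF assms(3)]] assms(3,5,7) by auto
qed

lemma large_replicate_blocks: "large_list (replicate K e) xs \<Longrightarrow>
  \<exists>bl rest. length bl = K \<and> xs = concat bl @ rest \<and> (\<forall>b\<in>set bl. large_list [e] b)"
proof (induction K arbitrary: xs)
  case 0 show ?case by (intro exI[of _ "[]"] exI[of _ xs]) simp
next
  case (Suc K)
  have r: "replicate (Suc K) e = replicate K e @ [e]" by (simp add: replicate_append_same)
  from large_append_split[of "[e]" "replicate K e" xs] Suc.prems r obtain i where
    i: "large_list [e] (take i xs)" "large_list (replicate K e) (drop i xs)" by auto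
  from Suc.IH[OF i(2)] obtain bl rest where bl: "length bl = K" "drop i xs = concat bl @ rest"
    "\<forall>b\<in>set bl. large_list [e] b" by blast
  show ?case
  proof (intro exI[of _ "take i xs # bl"] exI[of _ rest] conjI)
    show "xs = concat (take i xs # bl) @ rest" using bl(2) by (metis append_take_drop_id concat.simps(2) append.assoc)
  qed (use bl i in auto)
qed

lemma fund_iter_map_Suc_block:
  assumes "large_list [1] (m # bt)" "al \<noteq> []"
  shows "\<exists>ys zs. bt = ys @ zs \<and>
    fund_iter (map Suc al) (m # bt @ rest) = fund_iter (map Suc (fund al m)) (zs @ rest)"
proof -
  obtain al' a where al: "al = al' @ [a]" using assms(2) by (metis append_butlast_last_id)
  show ?thesis
  proof (cases "a = 0")
    case True
    have "large_list (replicate m 0) bt" using assms(1) by (simp add: fund_omega_pow_Suc)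
    then have "m \<le> length bt" by (rule large_replicate_0_length)
    then have take_m: "fund_iter (map Suc al' @ replicate m 0) (take m bt) = map Suc al'"
      using fund_iter_replicate_0[of "take m bt" m "map Suc al'"] by simp
    have "fund_iter (map Suc al) (m # bt @ rest) =
        fund_iter (map Suc al' @ replicate m 0) (take m bt @ drop m bt @ rest)"
      by (simp add: al True fund_snoc del: append_take_drop_id) (metis append_assoc append_take_drop_id)
    also have "\<dots> = fund_iter (map Suc (fund al m)) (drop m bt @ rest)"
      using take_m by (simp add: fund_iter_append al True fund_snoc)
    finally show ?thesis by (metis append_take_drop_id)
  next
    case False
    then have "fund (map Suc al) m = map Suc (fund al m)" by (simp add: al fund_snoc)
    then show ?thesis by auto
  qed
qed

text \<open>Raising every exponent by one multiplies the ordinal by \<omega>: if the heads of consecutive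
  \<omega>-large blocks form an \<alpha>-large list, their concatenation is \<omega>\<cdot>\<alpha>-large.\<close>

lemma large_concat_blocks:
  "(\<forall>b\<in>set bl. b \<noteq> [] \<and> large_list [1] b) \<Longrightarrow> doubling (concat bl) \<Longrightarrow> cnf al \<Longrightarrow>
   (bl \<noteq> [] \<longrightarrow> length al < hd (hd bl)) \<Longrightarrow> large_list al (map hd bl) \<Longrightarrow>
   large_list (map Suc al) (concat bl)"
proof (induction bl arbitrary: al)
  case Nil then show ?case by simp
next
  case (Cons b bl)
  obtain m bt where b: "b = m # bt" using Cons.prems(1) by (cases b) auto
  show ?case
  proof (cases "al = []")
    case True then show ?thesis by simp
  next
    case False
    have doubling_b: "doubling (m # bt @ concat bl)" using Cons.prems(2) b by simp
    have length_fund_al: "length (fund al m) < 2 * m"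
      using length_fund[of al m] Cons.prems(4) b by simp
    have "\<forall>z\<in>set (bt @ concat bl). 2 * m \<le> z" using doubling_b by simp
    then have big: "\<forall>z\<in>set (bt @ concat bl). length (fund al m) < z"
      using length_fund_al less_le_trans by blast
    have IH: "large_list (map Suc (fund al m)) (concat bl)"
    proof (rule Cons.IH)
      show "\<forall>b\<in>set bl. b \<noteq> [] \<and> large_list [1] b" using Cons.prems(1) by simp
      show "doubling (concat bl)" using doubling_b by (simp add: sorted_wrt_append)
      show "cnf (fund al m)" using cnf_fund[OF Cons.prems(3)] .
      show "bl \<noteq> [] \<longrightarrow> length (fund al m) < hd (hd bl)"
        using Cons.prems(1) big by (cases bl) (auto simp: neq_Nil_conv)
      show "large_list (fund al m) (map hd bl)" using Cons.prems(5) b by simp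
    qed
    obtain ys zs where "bt = ys @ zs"
      and step: "fund_iter (map Suc al) (m # bt @ concat bl) = fund_iter (map Suc (fund al m)) (zs @ concat bl)"
      using fund_iter_map_Suc_block[of m bt al "concat bl"] Cons.prems(1) b False by auto
    have "large_list (map Suc (fund al m)) (zs @ concat bl)"
    proof (rule large_prepend[OF _ _ _ IH])
      show "doubling (zs @ concat bl)" using doubling_b \<open>bt = ys @ zs\<close> by (simp add: sorted_wrt_append)
      show "cnf (map Suc (fund al m))" using cnf_fund[OF Cons.prems(3)] by (simp add: sorted_wrt_map)
      show "zs @ concat bl \<noteq> [] \<longrightarrow> length (map Suc (fund al m)) < hd (zs @ concat bl)"
        using big \<open>bt = ys @ zs\<close> hd_in_set[of "zs @ concat bl"] by auto
    qed
    then show ?thesis using step b by simp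
  qed
qed

lemma large_interval_split:
  assumes "q \<noteq> []" "large_list (p @ q) [t..<y]"
  shows "\<exists>s. t \<le> s \<and> s \<le> y \<and> large_list q [t..<s] \<and> large_list p [s..<y]"
proof -
  have "t \<le> y"
  proof (rule ccontr)
    assume "\<not> t \<le> y"
    then show False using assms by simp
  qed
  from large_append_split[OF assms] obtain i where
    "i \<le> y - t" "large_list q (take i [t..<y])" "large_list p (drop i [t..<y])"
    by auto
  with \<open>t \<le> y\<close> show ?thesis by (intro exI[of _ "t + i"]) (simp add: take_upt drop_upt)
qed

lemma large_interval_Suc:
  assumes "large_list [Suc e] [t..<y]"
  shows "t < y \<and> large_list (replicate t e) [Suc t..<y]"
proof -
  have "t < y"
  proof (rule ccontr)
    assume "\<not> t < y"
    then show False using assms by simp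
  qed
  then show ?thesis using assms by (simp add: upt_conv_Cons fund_omega_pow_Suc)
qed

lemma large_omega_interval: "large_list [1] [t..<s] \<Longrightarrow> 2 * t + 1 \<le> s"
proof -
  assume "large_list [1] [t..<s]"
  then have "t < s" "large_list (replicate t 0) [Suc t..<s]"
    using large_interval_Suc[of 0 t s] by simp_all
  then have "t < s" "t \<le> s - Suc t" using large_replicate_0_length[of t "[Suc t..<s]"] by simp_all
  then show ?thesis by linarith
qed

lemma large_omega_mult_interval: "large_list (replicate j 1) [t..<y] \<Longrightarrow> t \<le> y \<Longrightarrow> 2 ^ j * t \<le> y"
proof (induction j arbitrary: t)
  case 0
  then show ?case by simp
next
  case (Suc j)
  have "replicate (Suc j) (1::nat) = replicate j 1 @ [1]" by (simp add: replicate_append_same)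
  with large_interval_split[of "[1]" "replicate j 1" t y] Suc.prems(1) obtain s where
    "s \<le> y" "large_list [1] [t..<s]" "large_list (replicate j 1) [s..<y]"
    by auto
  then have "2 * t + 1 \<le> s" "2 ^ j * s \<le> y" using large_omega_interval Suc.IH by auto
  have "2 ^ Suc j * t = 2 ^ j * (2 * t)" by simp
  also have "\<dots> \<le> 2 ^ j * s" using \<open>2 * t + 1 \<le> s\<close> by simp
  also have "\<dots> \<le> y" by fact
  finally show ?case .
qed

lemma large_omega2_interval: "large_list [2] [z..<y] \<Longrightarrow> 2 ^ z \<le> y"
proof -
  assume "large_list [2] [z..<y]"
  then have "z < y" "large_list (replicate z 1) [Suc z..<y]"
    using large_interval_Suc[of 1 z y] by (simp_all add: numeral_2_eq_2)
  then have "2 ^ z * Suc z \<le> y" by (intro large_omega_mult_interval) auto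
  moreover have "2 ^ z \<le> 2 ^ z * Suc z" by simp
  ultimately show ?thesis by linarith
qed

lemma large_omega3_interval: "large_list [3] [x..<y] \<Longrightarrow> 2 \<le> x \<Longrightarrow> 2 ^ 2 ^ x \<le> y"
proof -
  assume "large_list [3] [x..<y]" and "2 \<le> x"
  then obtain k where k: "x = Suc (Suc k)" by (metis add_2_eq_Suc le_Suc_ex)
  have "large_list (replicate x 2) [Suc x..<y]"
    using large_interval_Suc[of 2 x y] \<open>large_list [3] [x..<y]\<close> by (simp add: numeral_3_eq_3)
  moreover have "replicate x (2::nat) = (replicate k 2 @ [2]) @ [2]"
    by (simp add: k replicate_app_Cons_same replicate_append_same)
  ultimately obtain s where s: "large_list [2] [Suc x..<s]" "large_list (replicate k 2 @ [2]) [s..<y]"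
    using large_interval_split[of "[2]" "replicate k 2 @ [2]" "Suc x" y] by auto
  then obtain s' where "s' \<le> y" "large_list [2] [s..<s']"
    using large_interval_split[of "[2]" "replicate k 2" s y] by auto
  then have "2 ^ s \<le> y" using large_omega2_interval[of s s'] by simp
  have "2 ^ x \<le> s"
    using large_omega2_interval[OF s(1)] power_increasing[of x "Suc x" "2::nat"] by simp
  then have "(2::nat) ^ 2 ^ x \<le> 2 ^ s" by (rule power_increasing) simp
  then show ?thesis using \<open>2 ^ s \<le> y\<close> by (rule order.trans)
qed

lemma square_le_exp2: "4 \<le> (M::nat) \<Longrightarrow> M^2 \<le> 2^M"
proof (induction M rule: dec_induct)
  case base then show ?case by simp
next
  case (step M)
  have "(Suc M)^2 = M^2 + 2*M + 1" by (simp add: power2_eq_square)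
  also have "\<dots> \<le> 2 * M^2"
  proof -
    have "4 * M \<le> M * M" using step(1) by simp
    then have "2 * M + 1 \<le> M * M" using step(1) by linarith
    then show ?thesis by (simp add: power2_eq_square)
  qed
  also have "\<dots> \<le> 2^Suc M" using step(3) by simp
  finally show ?case .
qed

lemma pow_double_le_tower: "4 \<le> (M::nat) \<Longrightarrow> M^(2*M) \<le> 2^(2^M)"
proof -
  assume m4: "4 \<le> M"
  have "M^(2*M) = (M^2)^M" by (simp add: power_mult)
  also have "\<dots> \<le> (2^M)^M" by (rule power_mono[OF square_le_exp2[OF m4]]) simp
  also have "\<dots> = 2^(M*M)" by (simp add: power_mult)
  also have "\<dots> \<le> 2^(2^M)" using square_le_exp2[OF m4] by (simp add: power2_eq_square)
  finally show ?thesis .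
qed

lemma sorted_less_le_last: "sorted_wrt (<) (xs::'a::linorder list) \<Longrightarrow> x \<in> set xs \<Longrightarrow> x \<le> last xs"
proof (induction xs)
  case (Cons a xs)
  then show ?case
    using last_in_set[of xs] by (cases "xs = []") (auto intro: less_imp_le)
qed simp

lemma sorted_less_hd_le: "sorted_wrt (<) (xs::'a::linorder list) \<Longrightarrow> x \<in> set xs \<Longrightarrow> hd xs \<le> x"
  by (cases xs) auto

lemma sorted_list_of_set_set_strict: "sorted_wrt (<) (xs::'a::linorder list) \<Longrightarrow> sorted_list_of_set (set xs) = xs"
  by (simp add: strict_sorted_iff sorted_list_of_set.idem_if_sorted_distinct)

lemma sorted_wrt_concat_elem: "sorted_wrt R (concat bs) \<Longrightarrow> b \<in> set bs \<Longrightarrow> sorted_wrt R b"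
  by (induction bs) (auto simp: sorted_wrt_append)

lemma sorted_wrt_concat:
  "(\<forall>L\<in>set Ls. sorted_wrt R L) \<Longrightarrow> sorted_wrt (\<lambda>L1 L2. \<forall>x\<in>set L1. \<forall>y\<in>set L2. R x y) Ls \<Longrightarrow>
   sorted_wrt R (concat Ls)"
  by (induction Ls) (auto simp: sorted_wrt_append)

lemma double_le_tower: "2 * (x::nat) \<le> 2^(2^x)"
proof -
  have "x < 2^x" by (rule less_exp)
  then have "Suc x \<le> 2^x" by (rule Suc_leI)
  then have "(2::nat)^Suc x \<le> 2^(2^x)" by (rule power_increasing) simp
  moreover have "2 * x \<le> 2^Suc x" using less_exp[of x] by simp
  ultimately show ?thesis by linarith
qed

definition homogeneous :: "(nat \<Rightarrow> nat \<Rightarrow> nat) \<Rightarrow> nat list \<Rightarrow> nat list \<Rightarrow> bool" where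
  "homogeneous P f g \<longleftrightarrow> (\<forall>x\<in>set f. \<forall>x'\<in>set f. \<forall>y\<in>set g. \<forall>y'\<in>set g. P x y = P x' y')"

definition homogeneous_groups :: "ord_cnf \<Rightarrow> (nat \<Rightarrow> nat \<Rightarrow> nat) \<Rightarrow> nat set \<Rightarrow> nat list list \<Rightarrow> bool" where
  "homogeneous_groups a P S Fs \<longleftrightarrow>
     (\<forall>f\<in>set Fs. f \<noteq> [] \<and> sorted_wrt (<) f \<and> set f \<subseteq> S \<and> large_list a f) \<and>
     sorted_wrt (\<lambda>f g. last f < hd g) Fs \<and> sorted_wrt (homogeneous P) Fs"

text \<open>The list form of is_grouping: groups are strictly increasing lists, so that Max and Min of a
  group become last and hd.\<close>

definition list_grouping :: "ord_cnf \<Rightarrow> ord_cnf \<Rightarrow> (nat \<Rightarrow> nat \<Rightarrow> nat) \<Rightarrow> nat set \<Rightarrow> nat list list \<Rightarrow> bool" where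
  "list_grouping a b P S Fs \<longleftrightarrow> homogeneous_groups a P S Fs \<and> large_list b (map last Fs)"

lemma sorted_map_last:
  assumes "homogeneous_groups a P S Fs"
  shows "sorted_wrt (<) (map last Fs)"
proof -
  have Fs: "\<forall>f\<in>set Fs. f \<noteq> [] \<and> sorted_wrt (<) f" "sorted_wrt (\<lambda>f g. last f < hd g) Fs"
    using assms by (auto simp: homogeneous_groups_def)
  show ?thesis
    unfolding sorted_wrt_map
  proof (rule sorted_wrt_mono_rel[OF _ Fs(2)])
    fix f g assume "f \<in> set Fs" "g \<in> set Fs" "last f < hd g"
    moreover have "hd g \<le> last g" using Fs(1) \<open>g \<in> set Fs\<close> by (simp add: sorted_less_le_last)
    ultimately show "last f < last g" by simp
  qed
qed

lemma homogeneous_groups_concat: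
  assumes G: "homogeneous_groups b P S Gs"
    and H: "\<forall>g\<in>set Gs. homogeneous_groups a P (set g) (H g)"
  shows "homogeneous_groups a P S (concat (map H Gs))"
proof -
  have G_mem: "\<forall>g\<in>set Gs. g \<noteq> [] \<and> sorted_wrt (<) g \<and> set g \<subseteq> S"
    and G_ord: "sorted_wrt (\<lambda>f g. last f < hd g) Gs" and G_hom: "sorted_wrt (homogeneous P) Gs"
    using G by (auto simp: homogeneous_groups_def)
  have H_mem: "\<And>g f. g \<in> set Gs \<Longrightarrow> f \<in> set (H g) \<Longrightarrow>
      f \<noteq> [] \<and> sorted_wrt (<) f \<and> set f \<subseteq> set g \<and> large_list a f"
    using H by (auto simp: homogeneous_groups_def)
  have "sorted_wrt (\<lambda>f g. last f < hd g) (concat (map H Gs))"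
  proof (rule sorted_wrt_concat)
    show "\<forall>L\<in>set (map H Gs). sorted_wrt (\<lambda>f g. last f < hd g) L"
      using H by (auto simp: homogeneous_groups_def)
    show "sorted_wrt (\<lambda>L1 L2. \<forall>x\<in>set L1. \<forall>y\<in>set L2. last x < hd y) (map H Gs)"
      unfolding sorted_wrt_map
    proof (rule sorted_wrt_mono_rel[OF _ G_ord], intro ballI)
      fix g1 g2 x y assume g: "g1 \<in> set Gs" "g2 \<in> set Gs" "last g1 < hd g2"
        and xy: "x \<in> set (H g1)" "y \<in> set (H g2)"
      have "last x \<le> last g1"
        using H_mem[OF g(1) xy(1)] G_mem g(1) by (metis last_in_set sorted_less_le_last subsetD)
      moreover have "hd g2 \<le> hd y"
        using H_mem[OF g(2) xy(2)] G_mem g(2) by (metis hd_in_set sorted_less_hd_le subsetD)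
      ultimately show "last x < hd y" using g(3) by simp
    qed
  qed
  moreover have "sorted_wrt (homogeneous P) (concat (map H Gs))"
  proof (rule sorted_wrt_concat)
    show "\<forall>L\<in>set (map H Gs). sorted_wrt (homogeneous P) L"
      using H by (auto simp: homogeneous_groups_def)
    show "sorted_wrt (\<lambda>L1 L2. \<forall>x\<in>set L1. \<forall>y\<in>set L2. homogeneous P x y) (map H Gs)"
      unfolding sorted_wrt_map
    proof (rule sorted_wrt_mono_rel[OF _ G_hom], intro ballI)
      fix g1 g2 x y assume g: "g1 \<in> set Gs" "g2 \<in> set Gs" "homogeneous P g1 g2"
        and xy: "x \<in> set (H g1)" "y \<in> set (H g2)"
      have "set x \<subseteq> set g1" "set y \<subseteq> set g2"
        using H_mem[OF g(1) xy(1)] H_mem[OF g(2) xy(2)] by auto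
      then show "homogeneous P x y" using g(3) unfolding homogeneous_def by blast
    qed
  qed
  ultimately show ?thesis
    using G_mem H_mem unfolding homogeneous_groups_def by fastforce
qed

lemma is_grouping_map_set:
  assumes "list_grouping a b P X Fs"
  shows "is_grouping a b X P (map set Fs)"
proof -
  have mem: "Fs ! i \<noteq> [] \<and> sorted_wrt (<) (Fs ! i) \<and> set (Fs ! i) \<subseteq> X \<and> large_list a (Fs ! i)"
    if "i < length Fs" for i
    using assms that by (auto simp: list_grouping_def homogeneous_groups_def)
  have hg: "homogeneous_groups a P X Fs" and maxes_large: "large_list b (map last Fs)"
    using assms by (auto simp: list_grouping_def)
  then have ord: "sorted_wrt (\<lambda>f g. last f < hd g) Fs" and hom: "sorted_wrt (homogeneous P) Fs"
    by (auto simp: homogeneous_groups_def)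
  have Max_eq: "Max (set (Fs ! i)) = last (Fs ! i)" if "i < length Fs" for i
    using mem[OF that] by (intro Max_eqI) (auto simp: sorted_less_le_last)
  have Min_eq: "Min (set (Fs ! i)) = hd (Fs ! i)" if "i < length Fs" for i
    using mem[OF that] by (intro Min_eqI) (auto simp: sorted_less_hd_le)
  have "{Max (map set Fs ! i) | i. i < length (map set Fs)} = (\<lambda>i. last (Fs ! i)) ` {..<length Fs}"
    by (auto simp: Max_eq image_def) (metis Max_eq nth_map)
  also have "\<dots> = set (map last Fs)"
  proof -
    have "set Fs = (\<lambda>i. Fs ! i) ` {..<length Fs}" by (auto simp: in_set_conv_nth image_iff)
    then show ?thesis by (simp add: image_image)
  qed
  finally have maxes: "{Max (map set Fs ! i) | i. i < length (map set Fs)} = set (map last Fs)" .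
  show ?thesis
    unfolding is_grouping_def
  proof (intro conjI allI impI)
    fix i assume i: "i < length (map set Fs)"
    then show "map set Fs ! i \<subseteq> X" "finite (map set Fs ! i)" "map set Fs ! i \<noteq> {}"
      using mem[of i] by auto
    show "large a (map set Fs ! i)"
      using mem[of i] i by (simp add: large_def sorted_list_of_set_set_strict)
  next
    fix i j assume ij: "i < j \<and> j < length (map set Fs)"
    then show "Max (map set Fs ! i) < Min (map set Fs ! j)"
      using sorted_wrt_nth_less[OF ord] by (simp add: Max_eq Min_eq)
  next
    show "large b {Max (map set Fs ! i) | i. i < length (map set Fs)}"
      unfolding maxes large_def sorted_list_of_set_set_strict[OF sorted_map_last[OF hg]]
      using maxes_large by simp
  next
    fix i j assume ij: "i < j \<and> j < length (map set Fs)"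
    then have "homogeneous P (Fs ! i) (Fs ! j)" using sorted_wrt_nth_less[OF hom] by simp
    moreover have sets: "map set Fs ! i = set (Fs ! i)" "map set Fs ! j = set (Fs ! j)" using ij by auto
    ultimately show "\<forall>x\<in>map set Fs ! i. \<forall>x'\<in>map set Fs ! i. \<forall>y\<in>map set Fs ! j. \<forall>y'\<in>map set Fs ! j.
        P x y = P x' y'"
      unfolding homogeneous_def sets by blast
  qed
qed

lemma homogeneous_pivot:
  assumes "\<forall>x\<in>set f. \<forall>y\<in>set g. P x y = P x t" and "\<forall>x\<in>set f. \<forall>x'\<in>set f. P x t = P x' t"
  shows "homogeneous P f g"
  unfolding homogeneous_def
proof (intro ballI)
  fix x x' y y' assume "x \<in> set f" "x' \<in> set f" "y \<in> set g" "y' \<in> set g"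
  then have "P x y = P x t" "P x t = P x' t" "P x' y' = P x' t" using assms by blast+
  then show "P x y = P x' y'" by simp
qed

lemma homogeneous_groups_mono:
  "homogeneous_groups a P S Fs \<Longrightarrow> S \<subseteq> S' \<Longrightarrow> homogeneous_groups a P S' Fs"
  by (auto simp: homogeneous_groups_def)

text \<open>\<omega>[x] = x, so the maxima form an \<omega>-large list once last f0 further groups follow f0.\<close>

lemma list_grouping_omega_Cons:
  assumes Fs: "homogeneous_groups a P S Fs" "length Fs = last f0"
    and f0: "f0 \<noteq> []" "sorted_wrt (<) f0" "set f0 \<subseteq> S" "large_list a f0"
    and f0_Fs: "\<forall>F\<in>set Fs. last f0 < hd F \<and> homogeneous P f0 F"
  shows "list_grouping a [1] P S (f0 # Fs)"
proof -
  have "homogeneous_groups a P S (f0 # Fs)"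
    using Fs(1) f0 f0_Fs by (auto simp: homogeneous_groups_def)
  moreover have "large_list [1] (map last (f0 # Fs))"
    using fund_iter_replicate_0[of "map last Fs" "last f0" "[]"] Fs(2)
    by (simp add: fund_omega_pow_Suc[of 0, simplified])
  ultimately show ?thesis by (simp add: list_grouping_def)
qed

locale tower_sparse_colouring =
  fixes X :: "nat set" and P :: "nat \<Rightarrow> nat \<Rightarrow> nat" and c :: nat
  assumes ge_4: "x \<in> X \<Longrightarrow> 4 \<le> x"
    and tower_gap: "x \<in> X \<Longrightarrow> y \<in> X \<Longrightarrow> x < y \<Longrightarrow> 2 ^ 2 ^ x \<le> y"
    and colour_less: "x \<in> X \<Longrightarrow> y \<in> X \<Longrightarrow> x < y \<Longrightarrow> P x y < c"
    and colours_pos: "0 < c"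
    and colours_le: "x \<in> X \<Longrightarrow> c \<le> x"
begin

lemma card_le_bound: "S \<subseteq> X \<Longrightarrow> \<forall>x\<in>S. x \<le> M \<Longrightarrow> card S \<le> M"
proof -
  assume "S \<subseteq> X" "\<forall>x\<in>S. x \<le> M"
  then have "S \<subseteq> {1..M}" using ge_4 by fastforce
  then show ?thesis using card_mono[of "{1..M}" S] by simp
qed

lemma colours_pow_le: "M \<in> X \<Longrightarrow> y \<in> X \<Longrightarrow> M < y \<Longrightarrow> a \<le> 2 * M \<Longrightarrow> c ^ a \<le> y"
proof -
  assume M: "M \<in> X" "y \<in> X" "M < y" "a \<le> 2 * M"
  have M_ge: "4 \<le> M" using ge_4 M(1) by simp
  have "c ^ a \<le> M ^ a" using colours_le[OF M(1)] by (rule power_mono) simp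
  also have "\<dots> \<le> M ^ (2 * M)" using M(4) M_ge by (intro power_increasing) auto
  also have "\<dots> \<le> 2 ^ 2 ^ M" using M_ge by (rule pow_double_le_tower)
  also have "\<dots> \<le> y" using tower_gap M(1-3) .
  finally show ?thesis .
qed

lemma doubling_if_sorted: "sorted_wrt (<) xs \<Longrightarrow> set xs \<subseteq> X \<Longrightarrow> doubling xs"
proof -
  assume s: "sorted_wrt (<) xs" and sx: "set xs \<subseteq> X"
  show ?thesis
  proof (rule sorted_wrt_mono_rel[OF _ s])
    fix x y assume "x \<in> set xs" "y \<in> set xs" "x < y"
    then have "2 ^ 2 ^ x \<le> y" using tower_gap sx by blast
    then show "2 * x \<le> y" using double_le_tower[of x] by linarith
  qed
qed

lemma hd_gt_length_singleton: "set xs \<subseteq> X \<Longrightarrow> xs \<noteq> [] \<longrightarrow> length [e] < hd xs"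
  using ge_4 by (cases xs) fastforce+

text \<open>Colour each y of the block by its profile, the colours of the pairs (x, y) for x in E and
  (y, t) for t in T.  The block minus its head is \<omega>^n\<cdot>m-large and there are at most
  c^(|E| + |T|) \<le> m profiles, so some profile class is \<omega>^n-large.\<close>

lemma large_homogeneous_sublist:
  assumes b: "large_list [Suc n] (m # bt)" "sorted_wrt (<) (m # bt)" "set (m # bt) \<subseteq> X"
    and E: "finite E" "E \<subseteq> X" "\<forall>x\<in>E. x < m"
    and T: "finite T" "T \<subseteq> X" "\<forall>t\<in>T. \<forall>y\<in>set bt. y < t"
    and M: "M \<in> X" "M < m" "\<forall>x\<in>E. x \<le> M" "card T \<le> M"
  shows "\<exists>f. set f \<subseteq> set bt \<and> sorted_wrt (<) f \<and> large_list [n] f \<and>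
    (\<forall>x\<in>E. \<forall>y\<in>set f. \<forall>y'\<in>set f. P x y = P x y') \<and>
    (\<forall>t\<in>T. \<forall>y\<in>set f. \<forall>y'\<in>set f. P y t = P y' t)"
proof -
  define chi where "chi y = (restrict (\<lambda>x. P x y) E, restrict (P y) T)" for y
  define V where "V = PiE E (\<lambda>_. {..<c}) \<times> PiE T (\<lambda>_. {..<c})"
  have "finite V" using E(1) T(1) by (simp add: V_def finite_PiE)
  moreover have "V \<noteq> {}" using colours_pos by (auto simp: V_def PiE_eq_empty_iff)
  moreover have "card V \<le> m"
  proof -
    have "card E \<le> M" using card_le_bound E(2) M(3) by blast
    then have "c ^ (card E + card T) \<le> m" using b(3) M by (intro colours_pow_le) auto
    then show ?thesis using E(1) T(1) by (simp add: V_def card_cartesian_product card_PiE power_add)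
  qed
  moreover have "doubling bt" using doubling_if_sorted b(2,3) by simp
  moreover have "bt \<noteq> [] \<longrightarrow> m < hd bt" using b(2) by (cases bt) auto
  moreover have "\<forall>y\<in>set bt. chi y \<in> V"
  proof
    fix y assume y: "y \<in> set bt"
    have y_X: "y \<in> X" and m_y: "m < y" using b(2,3) y by auto
    have "P x y < c" if "x \<in> E" for x
      using colour_less[OF _ y_X] E(2,3) m_y that by force
    moreover have "P y t < c" if "t \<in> T" for t
      using colour_less[OF y_X] T(2,3) y that by blast
    ultimately show "chi y \<in> V" unfolding chi_def V_def by (simp add: restrict_PiE_iff)
  qed
  moreover have "large_list (replicate m n) bt" using b(1) by (simp add: fund_omega_pow_Suc)
  ultimately have "\<exists>v\<in>V. large_list [n] (filter (\<lambda>y. chi y = v) bt)"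
    by (rule large_pigeonhole)
  then obtain v where v: "large_list [n] (filter (\<lambda>y. chi y = v) bt)" by blast
  define f where "f = filter (\<lambda>y. chi y = v) bt"
  have chi_eq: "restrict (\<lambda>x. P x y) E = restrict (\<lambda>x. P x y') E \<and> restrict (P y) T = restrict (P y') T"
    if "y \<in> set f" "y' \<in> set f" for y y'
  proof -
    have "chi y = chi y'" using that by (simp add: f_def)
    then show ?thesis by (simp add: chi_def)
  qed
  show ?thesis
  proof (intro exI[of _ f] conjI ballI)
    show "set f \<subseteq> set bt" "sorted_wrt (<) f" "large_list [n] f"
      using b(2) v by (auto simp: f_def sorted_wrt_filter)
  next
    fix x y y' assume "x \<in> E" "y \<in> set f" "y' \<in> set f"
    then show "P x y = P x y'" using fun_cong[OF conjunct1[OF chi_eq], of y y' x] by simp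
  next
    fix t y y' assume "t \<in> T" "y \<in> set f" "y' \<in> set f"
    then show "P y t = P y' t" using fun_cong[OF conjunct2[OF chi_eq], of y y' t] by simp
  qed
qed

text \<open>The blocks are handled from the last one backwards.  E collects the points before the
  current block; a point y of the block is classified by P x y for x \<in> E and by P y (hd F) for
  the groups F already chosen in later blocks.\<close>

lemma homogeneous_selection_Cons:
  assumes b: "large_list [Suc n] b" "sorted_wrt (<) (b @ concat Bs)" "set (b @ concat Bs) \<subseteq> X"
    and E: "finite E" "E \<subseteq> X" "\<forall>x\<in>E. x < hd b"
    and M: "M \<in> X" "M < hd b" "\<forall>x\<in>E. x \<le> M" "length Fs \<le> M"
    and Fs: "homogeneous_groups [n] P (set (concat Bs)) Fs"
      "\<forall>F\<in>set Fs. \<forall>x\<in>E \<union> set b. \<forall>y\<in>set F. \<forall>y'\<in>set F. P x y = P x y'"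
  shows "\<exists>f. homogeneous_groups [n] P (set (concat (b # Bs))) (f # Fs) \<and>
    (\<forall>x\<in>E. \<forall>y\<in>set f. \<forall>y'\<in>set f. P x y = P x y')"
proof -
  obtain m bt where b_eq: "b = m # bt" using b(1) by (cases b) auto
  have sorted_b: "sorted_wrt (<) b" and b_less: "\<forall>x\<in>set b. \<forall>y\<in>set (concat Bs). x < y"
    using b(2) by (simp_all add: sorted_wrt_append)
  have Fs_mem: "F \<noteq> [] \<and> set F \<subseteq> set (concat Bs)" if "F \<in> set Fs" for F
    using Fs(1) that by (auto simp: homogeneous_groups_def)
  define T where "T = hd ` set Fs"
  have T_in: "T \<subseteq> set (concat Bs)"
    unfolding T_def using Fs_mem hd_in_set by (intro image_subsetI) blast
  have "card T \<le> M"
    using card_image_le[of "set Fs" hd] card_length[of Fs] M(4) by (simp add: T_def)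
  moreover have "T \<subseteq> X" "\<forall>t\<in>T. \<forall>y\<in>set bt. y < t"
    using T_in b(3) b_less b_eq by auto
  moreover have "large_list [Suc n] (m # bt)" "sorted_wrt (<) (m # bt)" "set (m # bt) \<subseteq> X"
    "\<forall>x\<in>E. x < m" "finite T" "M < m"
    using b E(3) sorted_b M(2) by (auto simp: b_eq T_def)
  ultimately obtain f where f: "set f \<subseteq> set bt" "sorted_wrt (<) f" "large_list [n] f"
    "\<forall>x\<in>E. \<forall>y\<in>set f. \<forall>y'\<in>set f. P x y = P x y'"
    "\<forall>t\<in>T. \<forall>y\<in>set f. \<forall>y'\<in>set f. P y t = P y' t"
    using large_homogeneous_sublist[of n m bt E T M] E(1,2) M(1,3) by blast
  have "homogeneous P f F" if F: "F \<in> set Fs" for F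
  proof (rule homogeneous_pivot)
    have hd_F: "hd F \<in> set F" using Fs_mem[OF F] by simp
    show "\<forall>x\<in>set f. \<forall>y\<in>set F. P x y = P x (hd F)"
    proof (intro ballI)
      fix x y assume "x \<in> set f" "y \<in> set F"
      moreover have "x \<in> E \<union> set b" using \<open>x \<in> set f\<close> f(1) b_eq by auto
      ultimately show "P x y = P x (hd F)" using Fs(2)[rule_format, OF F _ _ hd_F] by blast
    qed
    show "\<forall>x\<in>set f. \<forall>x'\<in>set f. P x (hd F) = P x' (hd F)"
      using f(5) F unfolding T_def by blast
  qed
  moreover have "last f < hd F" if "F \<in> set Fs" for F
  proof -
    have "f \<noteq> []" using f(3) by auto
    then have "last f \<in> set b" using f(1) b_eq last_in_set by fastforce
    moreover have "hd F \<in> set (concat Bs)" using Fs_mem[OF that] hd_in_set by blast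
    ultimately show ?thesis using b_less by blast
  qed
  ultimately have "homogeneous_groups [n] P (set (concat (b # Bs))) (f # Fs)"
    using Fs(1) f(1-3) b_eq unfolding homogeneous_groups_def by auto
  then show ?thesis using f(4) by blast
qed

lemma homogeneous_selection:
  "(\<forall>b\<in>set Bs. large_list [Suc n] b) \<Longrightarrow> sorted_wrt (<) (concat Bs) \<Longrightarrow> set (concat Bs) \<subseteq> X \<Longrightarrow>
   finite E \<Longrightarrow> E \<subseteq> X \<Longrightarrow> (\<forall>x\<in>E. \<forall>y\<in>set (concat Bs). x < y) \<Longrightarrow>
   (\<forall>j<length Bs. \<exists>M\<in>X. M < hd (Bs ! j) \<and> (\<forall>x\<in>E \<union> set (concat (take j Bs)). x \<le> M) \<and> length Bs \<le> M) \<Longrightarrow>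
   \<exists>Fs. length Fs = length Bs \<and> homogeneous_groups [n] P (set (concat Bs)) Fs \<and>
     (\<forall>F\<in>set Fs. \<forall>x\<in>E. \<forall>y\<in>set F. \<forall>y'\<in>set F. P x y = P x y')"
proof (induction Bs arbitrary: E)
  case Nil
  show ?case by (intro exI[of _ "[]"]) (simp add: homogeneous_groups_def)
next
  case (Cons b Bs)
  have "\<exists>Fs. length Fs = length Bs \<and> homogeneous_groups [n] P (set (concat Bs)) Fs \<and>
      (\<forall>F\<in>set Fs. \<forall>x\<in>E \<union> set b. \<forall>y\<in>set F. \<forall>y'\<in>set F. P x y = P x y')"
  proof (rule Cons.IH)
    show "\<forall>j<length Bs. \<exists>M\<in>X. M < hd (Bs ! j) \<and> (\<forall>x\<in>(E \<union> set b) \<union> set (concat (take j Bs)). x \<le> M) \<and>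
        length Bs \<le> M"
    proof (intro allI impI)
      fix j assume "j < length Bs"
      with Cons.prems(7) obtain M where "M \<in> X" "M < hd (Bs ! j)"
        "\<forall>x\<in>E \<union> set (concat (take (Suc j) (b # Bs))). x \<le> M" "length (b # Bs) \<le> M"
        by (metis Suc_less_eq length_Cons nth_Cons_Suc)
      then show "\<exists>M\<in>X. M < hd (Bs ! j) \<and> (\<forall>x\<in>(E \<union> set b) \<union> set (concat (take j Bs)). x \<le> M) \<and>
          length Bs \<le> M"
        by (intro bexI[of _ M]) auto
    qed
  qed (use Cons.prems in \<open>auto simp: sorted_wrt_append\<close>)
  then obtain Fs where Fs_len: "length Fs = length Bs"
    and Fs_groups: "homogeneous_groups [n] P (set (concat Bs)) Fs"
    and Fs_E: "\<forall>F\<in>set Fs. \<forall>x\<in>E \<union> set b. \<forall>y\<in>set F. \<forall>y'\<in>set F. P x y = P x y'"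
    by blast
  from Cons.prems(7)[rule_format, of 0] obtain M
    where M: "M \<in> X" "M < hd b" "\<forall>x\<in>E. x \<le> M" "length Fs \<le> M"
    using Fs_len by auto
  have b: "large_list [Suc n] b" "sorted_wrt (<) (b @ concat Bs)" "set (b @ concat Bs) \<subseteq> X"
    using Cons.prems(1-3) by auto
  then have "b \<noteq> []" by auto
  then have "\<forall>x\<in>E. x < hd b" using Cons.prems(6) by simp
  from homogeneous_selection_Cons[OF b Cons.prems(4,5) this M Fs_groups Fs_E]
  obtain f where f_groups: "homogeneous_groups [n] P (set (concat (b # Bs))) (f # Fs)"
    and f_E: "\<forall>x\<in>E. \<forall>y\<in>set f. \<forall>y'\<in>set f. P x y = P x y'"
    by blast
  show ?case
  proof (intro exI[of _ "f # Fs"] conjI f_groups)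
    show "length (f # Fs) = length (b # Bs)" using Fs_len by simp
    show "\<forall>F\<in>set (f # Fs). \<forall>x\<in>E. \<forall>y\<in>set F. \<forall>y'\<in>set F. P x y = P x y'"
      using f_E Fs_E by (metis Un_iff set_ConsD)
  qed
qed

lemma large_Suc_split:
  assumes sorted: "sorted_wrt (<) gs" and in_X: "set gs \<subseteq> X" and large: "large_list [Suc e] gs"
  shows "\<exists>g0 u v. gs = g0 # u @ v \<and> large_list [e] u \<and> large_list [e] v"
proof -
  obtain g0 gs' where gs: "gs = g0 # gs'" using large by (cases gs) auto
  have "4 \<le> g0" using ge_4 in_X gs by simp
  then have "replicate g0 e = replicate (g0 - 1) e @ [e]"
    by (cases g0) (simp_all add: replicate_append_same)
  then have "large_list (replicate (g0 - 1) e @ [e]) gs'"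
    using large gs by (simp add: fund_omega_pow_Suc)
  from large_append_split[OF _ this] obtain i where
    u: "large_list [e] (take i gs')" and rest: "large_list (replicate (g0 - 1) e) (drop i gs')"
    by auto
  have "large_list [e] (drop i gs')"
  proof (rule large_mono_ordinal[OF _ _ _ _ rest])
    have "doubling gs" using doubling_if_sorted sorted in_X by blast
    then show "doubling (drop i gs')" by (simp add: gs)
    show "lexle [e] (replicate (g0 - 1) e)" using \<open>4 \<le> g0\<close> by (cases "g0 - 1") auto
    have "set (drop i gs') \<subseteq> X" using in_X gs set_drop_subset by fastforce
    then show "drop i gs' \<noteq> [] \<longrightarrow> length [e] < hd (drop i gs')" by (rule hd_gt_length_singleton)
  qed simp
  with u show ?thesis using gs by (intro exI[of _ g0] exI[of _ "take i gs'"] exI[of _ "drop i gs'"]) simp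
qed

lemma large_blocks_above:
  assumes f0: "f0 \<noteq> []" and sorted: "sorted_wrt (<) (f0 @ Y)" and in_X: "set (f0 @ Y) \<subseteq> X"
    and Y: "large_list [Suc e] Y"
  shows "\<exists>bl. length bl = last f0 \<and> set (concat bl) \<subseteq> set Y \<and> sorted_wrt (<) (f0 @ concat bl) \<and>
    (\<forall>b\<in>set bl. large_list [e] b)"
proof -
  obtain y0 ys where Y_eq: "Y = y0 # ys" using Y by (cases Y) auto
  have sorted_Y: "sorted_wrt (<) (y0 # ys)" using sorted by (simp add: sorted_wrt_append Y_eq)
  have "last f0 < y0" using sorted last_in_set[OF f0] by (simp add: Y_eq sorted_wrt_append)
  have ys_large: "large_list (replicate y0 e) ys"
    using Y by (simp add: Y_eq fund_omega_pow_Suc)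
  have ys_doubling: "doubling ys" using doubling_if_sorted sorted_Y in_X by (simp add: Y_eq)
  have ys_hd: "ys \<noteq> [] \<longrightarrow> length (replicate (last f0) e) < hd ys"
    using sorted_Y \<open>last f0 < y0\<close> by (cases ys) auto
  have "large_list (replicate (last f0) e) ys"
    using large_mono_ordinal[OF ys_doubling cnf_replicate lexle_replicate_mono ys_hd ys_large]
      \<open>last f0 < y0\<close> by simp
  from large_replicate_blocks[OF this] obtain bl rest where
    bl: "length bl = last f0" "ys = concat bl @ rest" "\<forall>b\<in>set bl. large_list [e] b"
    by blast
  moreover have "sorted_wrt (<) (f0 @ concat bl)"
    using sorted by (simp add: Y_eq bl(2) sorted_wrt_append)
  moreover have "set (concat bl) \<subseteq> set Y" by (auto simp: Y_eq bl(2))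
  ultimately show ?thesis by blast
qed

lemma selection_bound:
  assumes sorted: "sorted_wrt (<) (pre @ concat bs)" and in_X: "set (pre @ concat bs) \<subseteq> X"
    and "pre \<noteq> []" "\<forall>b\<in>set bs. b \<noteq> []" "length bs \<le> last pre" "j < length bs"
  shows "\<exists>M\<in>X. M < hd (bs ! j) \<and> (\<forall>x\<in>set (concat (take j bs)). x \<le> M) \<and> length bs \<le> M"
proof -
  define L where "L = pre @ concat (take j bs)"
  have "pre @ concat bs = L @ concat (drop j bs)"
    unfolding L_def by (metis append_assoc append_take_drop_id concat_append)
  then have sorted_L: "sorted_wrt (<) L" and L_less: "\<forall>x\<in>set L. \<forall>y\<in>set (concat (drop j bs)). x < y"
    using sorted by (simp_all add: sorted_wrt_append)
  have "bs ! j \<noteq> []" using assms(4,6) nth_mem by blast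
  then have "hd (bs ! j) \<in> set (concat (drop j bs))"
    using assms(6) by (simp add: Cons_nth_drop_Suc[symmetric])
  moreover have "last L \<in> set L" unfolding L_def using \<open>pre \<noteq> []\<close> by (intro last_in_set) simp
  ultimately have "last L < hd (bs ! j)" using L_less by blast
  moreover have "last L \<in> X" using \<open>last L \<in> set L\<close> in_X set_take_subset[of j bs] by (auto simp: L_def)
  moreover have upper: "\<forall>x\<in>set L. x \<le> last L" using sorted_less_le_last[OF sorted_L] by blast
  then have "\<forall>x\<in>set (concat (take j bs)). x \<le> last L" by (simp add: L_def)
  moreover have "last pre \<in> set L" using \<open>pre \<noteq> []\<close> by (simp add: L_def)
  then have "length bs \<le> last L" using upper assms(5) by fastforce
  ultimately show ?thesis by blast
qed

lemma homogeneous_groups_above: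
  assumes f0: "f0 \<noteq> []" and sorted: "sorted_wrt (<) (f0 @ Y)" and in_X: "set (f0 @ Y) \<subseteq> X"
    and Y: "large_list [n + 4] Y"
  shows "\<exists>Fs. length Fs = last f0 \<and> homogeneous_groups [n] P (set Y) Fs"
proof -
  have "large_list [Suc (n + 3)] Y" using Y by (simp add: add.commute)
  from large_blocks_above[OF f0 sorted in_X this] obtain bl where
    bl: "length bl = last f0" "set (concat bl) \<subseteq> set Y" "sorted_wrt (<) (f0 @ concat bl)"
      "\<forall>b\<in>set bl. large_list [n + 3] b"
    by blast
  have bl_X: "set (concat bl) \<subseteq> X" and sorted_cbl: "sorted_wrt (<) (concat bl)"
    using bl(2,3) in_X by (auto simp: sorted_wrt_append)
  have blocks_large: "\<forall>b\<in>set bl. large_list [Suc n] b"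
  proof
    fix b assume b: "b \<in> set bl"
    have b_X: "set b \<subseteq> X" using b bl_X by auto
    have "doubling b" using doubling_if_sorted[OF sorted_wrt_concat_elem[OF sorted_cbl b] b_X] .
    show "large_list [Suc n] b"
    proof (rule large_mono_ordinal[OF \<open>doubling b\<close> _ _ hd_gt_length_singleton[OF b_X]])
      show "lexle [Suc n] [n + 3]" by simp
      show "large_list [n + 3] b" using bl(4) b by blast
    qed simp
  qed
  then have "\<forall>b\<in>set bl. b \<noteq> []" by fastforce
  then have "\<forall>j<length bl. \<exists>M\<in>X. M < hd (bl ! j) \<and> (\<forall>x\<in>{} \<union> set (concat (take j bl)). x \<le> M) \<and>
      length bl \<le> M"
    using selection_bound[OF bl(3) _ f0] bl(1) in_X bl_X by simp
  from homogeneous_selection[OF blocks_large sorted_cbl bl_X finite.emptyI empty_subsetI _ this]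
  obtain Fs where "length Fs = length bl" and Fs: "homogeneous_groups [n] P (set (concat bl)) Fs"
    by blast
  then show ?thesis using bl(1) homogeneous_groups_mono[OF Fs bl(2)] by auto
qed

lemma large_homogeneous_tail:
  assumes sorted: "sorted_wrt (<) (pre @ w # v)" and in_X: "set (pre @ w # v) \<subseteq> X"
    and "pre \<noteq> []" and large: "large_list [Suc e] (w # v)"
  shows "\<exists>Y. set Y \<subseteq> set v \<and> sorted_wrt (<) Y \<and> large_list [e] Y \<and>
    (\<forall>x\<in>set pre. \<forall>y\<in>set Y. \<forall>y'\<in>set Y. P x y = P x y')"
proof -
  have M: "last pre \<in> X" "last pre < w" "\<forall>x\<in>set pre. x \<le> last pre"
    using last_in_set[OF \<open>pre \<noteq> []\<close>] sorted_less_le_last[of pre] sorted in_X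
    by (auto simp: sorted_wrt_append)
  have "sorted_wrt (<) (w # v)" "set (w # v) \<subseteq> X" "set pre \<subseteq> X" "\<forall>x\<in>set pre. x < w"
    using sorted in_X by (auto simp: sorted_wrt_append)
  from large_homogeneous_sublist[OF large this(1,2) finite_set this(3,4) finite.emptyI empty_subsetI _ M]
  show ?thesis by auto
qed

text \<open>First a tail Y on which each colour P x \<cdot> with x below Y is constant, then an \<omega>^n-large f0
  below Y whose colours to hd Y agree; together f0 \<times> Y is monochromatic.\<close>

lemma large_homogeneous_pair:
  assumes sorted: "sorted_wrt (<) gs" and in_X: "set gs \<subseteq> X" and large: "large_list [n + 6] gs"
  shows "\<exists>f0 Y. sorted_wrt (<) (f0 @ Y) \<and> set (f0 @ Y) \<subseteq> set gs \<and> large_list [n] f0 \<and>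
    large_list [n + 4] Y \<and> homogeneous P f0 Y"
proof -
  have "large_list [Suc (n + 5)] gs" using large by (simp add: add.commute)
  then obtain g0 u v where gs: "gs = g0 # u @ v" and u: "large_list [n + 5] u" and v: "large_list [n + 5] v"
    using large_Suc_split[OF sorted in_X] by blast
  obtain m ut where u_eq: "u = m # ut" using u by (cases u) auto
  obtain w v' where v_eq: "v = w # v'" using v by (cases v) auto
  have sorted_gs: "sorted_wrt (<) (g0 # m # ut @ w # v')" and gs_X: "set (g0 # m # ut @ w # v') \<subseteq> X"
    using sorted in_X by (simp_all add: gs u_eq v_eq)
  have "sorted_wrt (<) ((g0 # u) @ w # v')" "set ((g0 # u) @ w # v') \<subseteq> X"
    using sorted_gs gs_X by (simp_all add: u_eq)
  moreover have "large_list [Suc (n + 4)] (w # v')" using v by (simp add: v_eq add.commute)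
  ultimately obtain Y where Y: "set Y \<subseteq> set v'" "sorted_wrt (<) Y" "large_list [n + 4] Y"
    and Y_hom: "\<forall>x\<in>set (g0 # u). \<forall>y\<in>set Y. \<forall>y'\<in>set Y. P x y = P x y'"
    using large_homogeneous_tail[OF _ _ list.distinct(2)] by blast
  have "Y \<noteq> []" using Y(3) by auto
  then have hd_Y: "hd Y \<in> set Y" by simp
  have u_sorted: "sorted_wrt (<) (m # ut)" and u_X': "set (m # ut) \<subseteq> X"
    and g0: "g0 \<in> X" "g0 < m" and hd_Y_X: "{hd Y} \<subseteq> X" and ut_less: "\<forall>t\<in>{hd Y}. \<forall>y\<in>set ut. y < t"
    using sorted_gs gs_X Y(1) hd_Y by (auto simp: sorted_wrt_append)
  have u_large: "large_list [Suc n] (m # ut)"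
  proof (rule large_mono_ordinal[OF doubling_if_sorted[OF u_sorted u_X'] _ _ hd_gt_length_singleton[OF u_X']])
    show "large_list [n + 5] (m # ut)" using u by (simp add: u_eq)
  qed simp_all
  obtain f0 where f0: "set f0 \<subseteq> set ut" "sorted_wrt (<) f0" "large_list [n] f0"
    and f0_hom: "\<forall>y\<in>set f0. \<forall>y'\<in>set f0. P y (hd Y) = P y' (hd Y)"
    using large_homogeneous_sublist[OF u_large u_sorted u_X' finite.emptyI empty_subsetI _ finite.intros(2)[OF finite.emptyI]
        hd_Y_X ut_less g0] ge_4[OF g0(1)] by auto
  have "sorted_wrt (<) (f0 @ Y)"
  proof -
    have "\<forall>x\<in>set ut. \<forall>y\<in>set v'. x < y" using sorted_gs by (simp add: sorted_wrt_append)
    then have "\<forall>x\<in>set f0. \<forall>y\<in>set Y. x < y" using f0(1) Y(1) by blast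
    then show ?thesis using f0(2) Y(2) by (simp add: sorted_wrt_append)
  qed
  moreover have "set (f0 @ Y) \<subseteq> set gs" using f0(1) Y(1) by (auto simp: gs u_eq v_eq)
  moreover have "homogeneous P f0 Y"
  proof (rule homogeneous_pivot)
    have "set f0 \<subseteq> set (g0 # u)" using f0(1) by (auto simp: u_eq)
    then show "\<forall>x\<in>set f0. \<forall>y\<in>set Y. P x y = P x (hd Y)" using Y_hom hd_Y by blast
    show "\<forall>x\<in>set f0. \<forall>x'\<in>set f0. P x (hd Y) = P x' (hd Y)" by (rule f0_hom)
  qed
  ultimately show ?thesis using f0(3) Y(3) by blast
qed

lemma list_grouping_omega:
  assumes "sorted_wrt (<) gs" and in_X: "set gs \<subseteq> X" and "large_list [n + 6] gs"
  shows "\<exists>Fs. list_grouping [n] [1] P (set gs) Fs"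
proof -
  obtain f0 Y where f0_Y: "sorted_wrt (<) (f0 @ Y)" "set (f0 @ Y) \<subseteq> set gs"
    and f0: "large_list [n] f0" and Y: "large_list [n + 4] Y" and hom: "homogeneous P f0 Y"
    using large_homogeneous_pair[OF assms] by blast
  have "f0 \<noteq> []" using f0 by auto
  moreover have "set (f0 @ Y) \<subseteq> X" using f0_Y(2) in_X by blast
  ultimately obtain Fs where Fs: "length Fs = last f0" "homogeneous_groups [n] P (set Y) Fs"
    using homogeneous_groups_above f0_Y(1) Y by blast
  have "last f0 < hd F \<and> homogeneous P f0 F" if F: "F \<in> set Fs" for F
  proof
    have F_Y: "F \<noteq> []" "set F \<subseteq> set Y" using Fs(2) F by (auto simp: homogeneous_groups_def)
    show "last f0 < hd F"
      using f0_Y(1) last_in_set[OF \<open>f0 \<noteq> []\<close>] hd_in_set[OF F_Y(1)] F_Y(2)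
      by (auto simp: sorted_wrt_append)
    show "homogeneous P f0 F" using hom F_Y(2) unfolding homogeneous_def by blast
  qed
  moreover have "set Y \<subseteq> set gs" "set f0 \<subseteq> set gs" "sorted_wrt (<) f0"
    using f0_Y by (auto simp: sorted_wrt_append)
  ultimately show ?thesis
    using list_grouping_omega_Cons[OF homogeneous_groups_mono[OF Fs(2)] Fs(1) \<open>f0 \<noteq> []\<close>] f0 by blast
qed

lemma large_chosen_elements:
  assumes G: "list_grouping a [k] P S Gs" "S \<subseteq> X" and h: "\<forall>g\<in>set Gs. h g \<in> set g"
  shows "large_list [k] (map h Gs)"
proof -
  have G_mem: "g \<noteq> [] \<and> sorted_wrt (<) g \<and> set g \<subseteq> X" if "g \<in> set Gs" for g
    using G that by (auto simp: list_grouping_def homogeneous_groups_def)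
  have G_ord: "sorted_wrt (\<lambda>f g. last f < hd g) Gs" and G_large: "large_list [k] (map last Gs)"
    using G by (auto simp: list_grouping_def homogeneous_groups_def)
  have h_X: "set (map h Gs) \<subseteq> X" using h G_mem by auto
  show ?thesis
  proof (rule large_mono[OF _ _ _ _ hd_gt_length_singleton[OF h_X] G_large])
    show "list_all2 (\<le>) (map h Gs) (map last Gs)"
      using h G_mem by (auto simp: list_all2_map1 list_all2_map2 list_all2_same intro: sorted_less_le_last)
    have "sorted_wrt (<) (map h Gs)"
      unfolding sorted_wrt_map
    proof (rule sorted_wrt_mono_rel[OF _ G_ord])
      fix g1 g2 assume g: "g1 \<in> set Gs" "g2 \<in> set Gs" "last g1 < hd g2"
      have "h g1 \<le> last g1" using h g(1) G_mem[OF g(1)] sorted_less_le_last by blast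
      moreover have "hd g2 \<le> h g2" using h g(2) G_mem[OF g(2)] sorted_less_hd_le by blast
      ultimately show "h g1 < h g2" using g(3) by simp
    qed
    then show "doubling (map h Gs)" using doubling_if_sorted h_X by blast
  qed simp_all
qed

lemma large_maxes_concat:
  assumes G: "list_grouping [e] [k] P S Gs" and S_X: "S \<subseteq> X"
    and H: "\<forall>g\<in>set Gs. list_grouping [n] [1] P (set g) (H g)"
  shows "large_list [Suc k] (map last (concat (map H Gs)))"
proof -
  define bl where "bl = map (\<lambda>g. map last (H g)) Gs"
  have concat_bl: "concat bl = map last (concat (map H Gs))"
    by (simp add: bl_def map_concat comp_def)
  have G_groups: "homogeneous_groups [e] P S Gs" using G by (simp add: list_grouping_def)
  have H_large: "large_list [1] (map last (H g))" and H_ne: "H g \<noteq> []" if "g \<in> set Gs" for g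
    using H that by (auto simp: list_grouping_def)
  have first_max: "last (hd (H g)) \<in> set g" if g: "g \<in> set Gs" for g
  proof -
    have "hd (H g) \<in> set (H g)" using H_ne[OF g] by simp
    then have "hd (H g) \<noteq> [] \<and> set (hd (H g)) \<subseteq> set g"
      using H g by (auto simp: list_grouping_def homogeneous_groups_def)
    then show ?thesis using last_in_set by blast
  qed
  have hd_bl: "map hd bl = map (\<lambda>g. last (hd (H g))) Gs"
    using H_ne by (simp add: bl_def hd_map)
  have groups: "homogeneous_groups [n] P S (concat (map H Gs))"
    using homogeneous_groups_concat[OF G_groups] H by (simp add: list_grouping_def)
  then have "sorted_wrt (<) (concat bl)"
    unfolding concat_bl by (rule sorted_map_last)
  moreover have "set (concat bl) \<subseteq> X"
  proof
    fix z assume "z \<in> set (concat bl)"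
    then obtain f where f: "f \<in> set (concat (map H Gs))" "z = last f" by (auto simp: concat_bl)
    then have "f \<noteq> [] \<and> set f \<subseteq> S" using groups by (auto simp: homogeneous_groups_def)
    then show "z \<in> X" using f(2) last_in_set S_X by blast
  qed
  ultimately have bl_doubling: "doubling (concat bl)" by (rule doubling_if_sorted)
  have bl_hd_large: "large_list [k] (map hd bl)"
    unfolding hd_bl by (rule large_chosen_elements[OF G S_X]) (use first_max in blast)
  have bl_blocks: "\<forall>b\<in>set bl. b \<noteq> [] \<and> large_list [1] b"
    using H_large H_ne by (auto simp: bl_def)
  have "set (map hd bl) \<subseteq> X"
    using first_max G_groups S_X by (auto simp: hd_bl homogeneous_groups_def)
  then have bl_hd: "bl \<noteq> [] \<longrightarrow> length [k] < hd (hd bl)"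
    using hd_gt_length_singleton[of "map hd bl" k] by (cases bl) auto
  have "large_list (map Suc [k]) (concat bl)"
    by (rule large_concat_blocks[OF bl_blocks bl_doubling _ bl_hd bl_hd_large]) simp
  then show ?thesis by (simp add: concat_bl)
qed

lemma list_grouping_refine:
  assumes G: "list_grouping [n + 6] [k] P S Gs" and S_X: "S \<subseteq> X"
  shows "\<exists>Fs. list_grouping [n] [Suc k] P S Fs"
proof -
  have "\<forall>g\<in>set Gs. sorted_wrt (<) g \<and> set g \<subseteq> X \<and> large_list [n + 6] g"
    using G S_X by (auto simp: list_grouping_def homogeneous_groups_def)
  then have "\<forall>g\<in>set Gs. \<exists>Hs. list_grouping [n] [1] P (set g) Hs"
    using list_grouping_omega by blast
  then obtain H where H: "\<forall>g\<in>set Gs. list_grouping [n] [1] P (set g) (H g)"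
    by (auto dest!: bchoice)
  have "homogeneous_groups [n] P S (concat (map H Gs))"
    using G H by (intro homogeneous_groups_concat[of "[n + 6]"]) (auto simp: list_grouping_def)
  moreover have "large_list [Suc k] (map last (concat (map H Gs)))"
    using large_maxes_concat[OF G S_X H] .
  ultimately show ?thesis unfolding list_grouping_def by blast
qed

lemma list_grouping_exists:
  assumes "sorted_wrt (<) xs" "set xs \<subseteq> X" "large_list [n + 6 * k] xs"
  shows "\<exists>Fs. list_grouping [n] [k] P (set xs) Fs"
  using assms(3)
proof (induction k arbitrary: n)
  case 0
  then have "xs \<noteq> []" by auto
  then have "list_grouping [n] [0] P (set xs) [xs]"
    using 0 assms(1) by (simp add: list_grouping_def homogeneous_groups_def fund_def)
  then show ?case ..
next
  case (Suc k)
  have "large_list [(n + 6) + 6 * k] xs" using Suc.prems by (simp add: algebra_simps)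
  then obtain Gs where "list_grouping [n + 6] [k] P (set xs) Gs" using Suc.IH by blast
  then show ?case using list_grouping_refine assms(2) by blast
qed

end

lemma tower_sparse_colouring_Min:
  assumes X: "finite X" "sparse (omega_pow 3) X" and P: "\<forall>x\<in>X. \<forall>y\<in>X. x < y \<longrightarrow> P x y < Min X"
  shows "tower_sparse_colouring X P (Min X)"
proof
  have Min_X: "3 < Min X" and gaps: "\<forall>x\<in>X. \<forall>y\<in>X. x < y \<longrightarrow> large [3] {x..<y}"
    using X(2) by (auto simp: sparse_def omega_pow_def)
  show ge_4: "4 \<le> x" if "x \<in> X" for x using Min_le[OF X(1) that] Min_X by simp
  show "2 ^ 2 ^ x \<le> y" if "x \<in> X" "y \<in> X" "x < y" for x y
    using large_omega3_interval[of x y] gaps ge_4[OF that(1)] that by (simp add: large_def)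
  show "P x y < Min X" if "x \<in> X" "y \<in> X" "x < y" for x y using P that by blast
  show "0 < Min X" using Min_X by simp
  show "Min X \<le> x" if "x \<in> X" for x using Min_le[OF X(1) that] .
qed

theorem mainTheorem16:
  fixes n k :: nat and X :: "nat set"
  assumes "finite X"
    and "large (omega_pow (n + 6 * k)) X"
    and "sparse (omega_pow 3) X"
  shows "admits_grouping (omega_pow n) (omega_pow k) (Min X) X"
  unfolding admits_grouping_def
proof (intro allI impI)
  fix P assume "\<forall>x\<in>X. \<forall>y\<in>X. x < y \<longrightarrow> P x y < Min X"
  with assms(1,3) interpret tower_sparse_colouring X P "Min X"
    by (rule tower_sparse_colouring_Min)
  have "large_list [n + 6 * k] (sorted_list_of_set X)"
    using assms(2) by (simp add: large_def omega_pow_def)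
  moreover have "sorted_wrt (<) (sorted_list_of_set X)" "set (sorted_list_of_set X) = X"
    using assms(1) by simp_all
  ultimately obtain Fs where "list_grouping [n] [k] P X Fs"
    using list_grouping_exists[of "sorted_list_of_set X" n k] by auto
  then show "\<exists>Fs. is_grouping (omega_pow n) (omega_pow k) X P Fs"
    unfolding omega_pow_def by (blast intro: is_grouping_map_set)
qed

end
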